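(* Let $p$ be a CFM process. Then $p$ does not satisfy DNI if and only if there exists a sequential process $p_i \in \mathrm{dec}(p)$ such that $p_i$ does not satisfy DNI.
   Context: Fix a finite set of actions $Act = H \cup L \cup \{\tau\}$, where $H$ (high-level actions) and $L$ (low-level actions) are disjoint and $\tau$ is the silent action; $\mu$ ranges over $Act$, $h$ over $H$. Fix a finite set of process constants $A,B,C,\dots$ disjoint from $Act$. CFM terms are given by three syntactic categories: guarded processes $s ::= \mathbf{0} \mid \mu.q \mid s+s$; sequential processes $q ::= s \mid C$; parallel processes $p ::= q \mid p \,|\, p$. A CFM process is a term all of whose constants have a defining equation $C \doteq s$ with $s$ guarded. The LTS semantics is given by the rules: $\mu.p \xrightarrow{\mu} p$; if $p \xrightarrow{\mu} p'$ and $C \doteq p$ then $C \xrightarrow{\mu} p'$; if $p \xrightarrow{\mu} p'$ then $p+q \xrightarrow{\mu} p'$ and $q+p \xrightarrow{\mu} p'$; if $p \xrightarrow{\mu} p'$ then $p\,|\,q \xrightarrow{\mu} p'\,|\,q$ and $q\,|\,p \xrightarrow{\mu} q\,|\,p'$. A process $p'$ is reachable from $p$ if $p \to^* p'$ in this LTS. A finite-state machine (FSM) is $N=(S,A,T)$ with $S$ a finite set of places, $A$ a finite set of labels containing $\tau$, and $T \subseteq S \times A \times (S \cup \{\theta\})$, where $\theta$ is the empty multiset. Markings are finite multisets over $S$ ($\oplus$ is multiset union, $\ominus$ multiset difference). A transition $t=(s,\ell,m)$ has pre-set $s$, label $\ell$, post-set $m$; it is enabled at marking $m_1$ if $s \in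 m_1$, and firing gives $m_1 \xrightarrow{\ell} (m_1 \ominus s)\oplus m$. Net semantics of CFM: places are the sequential CFM processes other than $\mathbf{0}$. The decomposition function is $\mathrm{dec}(\mathbf{0})=\theta$, $\mathrm{dec}(\mu.p)=\{\mu.p\}$, $\mathrm{dec}(p+p')=\{p+p'\}$, $\mathrm{dec}(C)=\{C\}$, $\mathrm{dec}(p\,|\,p')=\mathrm{dec}(p)\oplus\mathrm{dec}(p')$. The net $[\![p]\!]$ of a CFM process $p$ is an FSM with initial marking $\mathrm{dec}(p)$, all of whose places and transitions are reachable from $\mathrm{dec}(p)$; its transitions are the triples $(s,\mu,\mathrm{dec}(s'))$ for reachable places $s$ with $s \xrightarrow{\mu} s'$ in the LTS (here $s'$ is sequential, so $\mathrm{dec}(s')$ is $\theta$ or a single place). The net $[\![p\setminus H]\!]$ is obtained from $[\![p]\!]=(S,A,T,\mathrm{dec}(p))$ by renaming each place $s$ as $s\setminus H$, deleting all transitions with label in $H$ (keeping the others with places renamed), taking labels $A\setminus H$, and initial marking $\mathrm{dec}(p)\setminus H$ (renaming applied elementwise); for a marking $m$ of $[\![p]\!]$, $m\setminus H$ is the elementwise renamed marking. Branching bisimilarity on places: in an FSM, $s \Rightarrow^{\epsilon} m$ is the least relation with $s \Rightarrow^\epsilon s$, and if $s \Rightarrow^\epsilon s'$ and $s' \xrightarrow{\tau} m$ then $s \Rightarrow^\epsilon m$ ($m$ a place or $\theta$). A relation $R \subseteq S\times S$ is a branching bisimulation if whenever $(s_1,s_2)\in R$, for every $\ell$ and every $s_1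 \xrightarrow{\ell} m_1$: either $\ell=\tau$ and there is $m_2$ with $s_2 \Rightarrow^\epsilon m_2$, $(s_1,m_2)\in R$ and $(m_1,m_2)\in R$; or there are $s, m_2$ with $s_2 \Rightarrow^\epsilon s \xrightarrow{\ell} m_2$, $(s_1,s)\in R$ and either $m_1=\theta=m_2$ or $(m_1,m_2)\in R$; and symmetrically for moves of $s_2$. Branching bisimilarity $\approx$ is the union of all branching bisimulations. The additive closure $R^\oplus$ of a place relation $R$ is the least relation on markings with $(\theta,\theta)\in R^\oplus$ and, if $(s_1,s_2)\in R$ and $(m_1,m_2)\in R^\oplus$, then $(s_1\oplus m_1, s_2\oplus m_2)\in R^\oplus$. Branching team equivalence is $\approx^\oplus$. For CFM processes, $p \approx^\oplus q$ means $\mathrm{dec}(p)\approx^\oplus \mathrm{dec}(q)$ in the union of the nets of $p$ and $q$; in particular $p'\setminus H \approx^\oplus p''\setminus H$ means that the markings $\mathrm{dec}(p')\setminus H$ and $\mathrm{dec}(p'')\setminus H$ are related by $\approx^\oplus$ (computed in the union of the nets $[\![p'\setminus H]\!]$ and $[\![p''\setminus H]\!]$). DNI (Distributed Non-Interference): a CFM process $p$ satisfies DNI if for all $p',p''$ reachable from $p$ and every $h\in H$ with $p' \xrightarrow{h} p''$, we have $p'\setminus H \approx^\oplus p''\setminus H$. Equivalently, for all markings $m_1,m_2$ reachable from $\mathrm{dec}(p)$ in $[\![p]\!]$ and every $h\in H$ with $m_1 \xrightarrow{h} m_2$, the markings $m_1\setminus H$ and $m_2\setminus H$ of $[\![p\setminus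 H]\!]$ are related by $\approx^\oplus$. *)

theory Defs
  imports Main "HOL-Library.Multiset"
begin

datatype ('a, 'c) proc =
    PNil
  | PPre 'a "('a, 'c) proc"
  | PSum "('a, 'c) proc" "('a, 'c) proc"
  | PCon 'c
  | PPar "('a, 'c) proc" "('a, 'c) proc"

fun guarded :: "('a, 'c) proc \<Rightarrow> bool" where
  "guarded PNil = True"
| "guarded (PPre a q) = (guarded q \<or> (\<exists>C. q = PCon C))"
| "guarded (PSum s t) = (guarded s \<and> guarded t)"
| "guarded (PCon C) = False"
| "guarded (PPar p q) = False"

definition sequential :: "('a, 'c) proc \<Rightarrow> bool" where
  "sequential q \<longleftrightarrow> guarded q \<or> (\<exists>C. q = PCon C)"

fun parallel :: "('a, 'c) proc \<Rightarrow> bool" where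
  "parallel (PPar p q) = (parallel p \<and> parallel q)"
| "parallel p = sequential p"

text \<open>Defining equations: \<open>\<Delta> C\<close> is the body of constant \<open>C\<close>.\<close>
definition cfm_defs :: "('c \<Rightarrow> ('a, 'c) proc) \<Rightarrow> bool" where
  "cfm_defs \<Delta> \<longleftrightarrow> (\<forall>C. guarded (\<Delta> C))"

definition cfm_process :: "('c \<Rightarrow> ('a, 'c) proc) \<Rightarrow> ('a, 'c) proc \<Rightarrow> bool" where
  "cfm_process \<Delta> p \<longleftrightarrow> parallel p \<and> cfm_defs \<Delta>"

inductive step :: "('c \<Rightarrow> ('a, 'c) proc) \<Rightarrow> ('a, 'c) proc \<Rightarrow> 'a \<Rightarrow> ('a, 'c) proc \<Rightarrow> bool"
  for \<Delta> where
  pre: "step \<Delta> (PPre \<mu> p) \<mu> p"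
| con: "step \<Delta> (\<Delta> C) \<mu> p' \<Longrightarrow> step \<Delta> (PCon C) \<mu> p'"
| suml: "step \<Delta> p \<mu> p' \<Longrightarrow> step \<Delta> (PSum p q) \<mu> p'"
| sumr: "step \<Delta> p \<mu> p' \<Longrightarrow> step \<Delta> (PSum q p) \<mu> p'"
| parl: "step \<Delta> p \<mu> p' \<Longrightarrow> step \<Delta> (PPar p q) \<mu> (PPar p' q)"
| parr: "step \<Delta> p \<mu> p' \<Longrightarrow> step \<Delta> (PPar q p) \<mu> (PPar q p')"

definition reachable :: "('c \<Rightarrow> ('a, 'c) proc) \<Rightarrow> ('a, 'c) proc \<Rightarrow> ('a, 'c) proc \<Rightarrow> bool" where
  "reachable \<Delta> = (\<lambda>p p'. \<exists>\<mu>. step \<Delta> p \<mu> p')\<^sup>*\<^sup>*"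

record ('s, 'l) fsm =
  places :: "'s set"
  labels :: "'l set"
  trans :: "('s \<times> 'l \<times> 's multiset) set"

definition fire :: "('s, 'l) fsm \<Rightarrow> 's multiset \<Rightarrow> 'l \<Rightarrow> 's multiset \<Rightarrow> bool" where
  "fire N m1 l m2 \<longleftrightarrow> (\<exists>s m. (s, l, m) \<in> trans N \<and> s \<in># m1 \<and> m2 = (m1 - {#s#}) + m)"

text \<open>\<open>s \<Rightarrow>\<^sup>\<epsilon> m\<close> (the target is a place, i.e. a singleton marking, or \<theta>).\<close>
inductive eps :: "'l \<Rightarrow> ('s, 'l) fsm \<Rightarrow> 's \<Rightarrow> 's multiset \<Rightarrow> bool"
  for tau N where
  refl: "eps tau N s {#s#}"
| tstep: "eps tau N s {#s'#} \<Longrightarrow> (s', tau, m) \<in> trans N \<Longrightarrow> eps tau N s m"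

definition prel :: "('s \<times> 's) set \<Rightarrow> 's multiset \<Rightarrow> 's multiset \<Rightarrow> bool" where
  "prel R m1 m2 \<longleftrightarrow> (\<exists>a b. m1 = {#a#} \<and> m2 = {#b#} \<and> (a, b) \<in> R)"

definition bb_half :: "'l \<Rightarrow> ('s, 'l) fsm \<Rightarrow> ('s \<times> 's) set \<Rightarrow> bool" where
  "bb_half tau N R \<longleftrightarrow>
    (\<forall>s1 s2. (s1, s2) \<in> R \<longrightarrow>
      (\<forall>l m1. (s1, l, m1) \<in> trans N \<longrightarrow>
         (l = tau \<and> (\<exists>s'. eps tau N s2 {#s'#} \<and> (s1, s') \<in> R \<and> prel R m1 {#s'#}))
       \<or> (\<exists>s m2. eps tau N s2 {#s#} \<and> (s, l, m2) \<in> trans N \<and> (s1, s) \<in> R \<and>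
                 ((m1 = {#} \<and> m2 = {#}) \<or> prel R m1 m2))))"

definition branching_bisim :: "'l \<Rightarrow> ('s, 'l) fsm \<Rightarrow> ('s \<times> 's) set \<Rightarrow> bool" where
  "branching_bisim tau N R \<longleftrightarrow>
     R \<subseteq> places N \<times> places N \<and> bb_half tau N R \<and> bb_half tau N (R\<inverse>)"

definition bbisimilar :: "'l \<Rightarrow> ('s, 'l) fsm \<Rightarrow> ('s \<times> 's) set" where
  "bbisimilar tau N = \<Union>{R. branching_bisim tau N R}"

inductive_set add_closure :: "('s \<times> 's) set \<Rightarrow> ('s multiset \<times> 's multiset) set"
  for R where
  empty: "({#}, {#}) \<in> add_closure R"
| add: "(s1, s2) \<in> R \<Longrightarrow> (m1, m2) \<in> add_closure R \<Longrightarrow>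
          (add_mset s1 m1, add_mset s2 m2) \<in> add_closure R"

definition fsm_union :: "('s, 'l) fsm \<Rightarrow> ('s, 'l) fsm \<Rightarrow> ('s, 'l) fsm" where
  "fsm_union N1 N2 = \<lparr>places = places N1 \<union> places N2, labels = labels N1 \<union> labels N2,
                        trans = trans N1 \<union> trans N2\<rparr>"

fun dec :: "('a, 'c) proc \<Rightarrow> ('a, 'c) proc multiset" where
  "dec PNil = {#}"
| "dec (PPre \<mu> p) = {#PPre \<mu> p#}"
| "dec (PSum p q) = {#PSum p q#}"
| "dec (PCon C) = {#PCon C#}"
| "dec (PPar p q) = dec p + dec q"

text \<open>Places of \<open>[[p]]\<close>: sequential processes (other than 0) reachable from \<open>dec p\<close>.\<close>
inductive_set net_places :: "('c \<Rightarrow> ('a, 'c) proc) \<Rightarrow> ('a, 'c) proc \<Rightarrow> ('a, 'c) proc set"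
  for \<Delta> p where
  init: "s \<in># dec p \<Longrightarrow> s \<in> net_places \<Delta> p"
| succ: "s \<in> net_places \<Delta> p \<Longrightarrow> step \<Delta> s \<mu> s' \<Longrightarrow> s'' \<in># dec s' \<Longrightarrow>
           s'' \<in> net_places \<Delta> p"

definition cfm_net :: "('c \<Rightarrow> ('a, 'c) proc) \<Rightarrow> ('a, 'c) proc \<Rightarrow> (('a, 'c) proc, 'a) fsm" where
  "cfm_net \<Delta> p = \<lparr>places = net_places \<Delta> p, labels = UNIV,
     trans = {(s, \<mu>, dec s') | s \<mu> s'. s \<in> net_places \<Delta> p \<and> step \<Delta> s \<mu> s'}\<rparr>"

text \<open>The renaming \<open>s \<mapsto> s\H\<close> is injective, so we identify
  the place \<open>s\H\<close> with \<open>s\<close> (renaming by the identity); H-labelled transitions are deleted.\<close>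
definition net_restrict :: "'a set \<Rightarrow> (('a, 'c) proc, 'a) fsm \<Rightarrow> (('a, 'c) proc, 'a) fsm" where
  "net_restrict H N = \<lparr>places = places N, labels = labels N - H,
     trans = {(s, l, m). (s, l, m) \<in> trans N \<and> l \<notin> H}\<rparr>"

definition DNI :: "'a \<Rightarrow> 'a set \<Rightarrow> ('c \<Rightarrow> ('a, 'c) proc) \<Rightarrow> ('a, 'c) proc \<Rightarrow> bool" where
  "DNI tau H \<Delta> p \<longleftrightarrow>
    (\<forall>p' p'' h. reachable \<Delta> p p' \<and> reachable \<Delta> p p'' \<and> h \<in> H \<and> step \<Delta> p' h p'' \<longrightarrow>
       (dec p', dec p'') \<in> add_closure (bbisimilar tau
          (fsm_union (net_restrict H (cfm_net \<Delta> p')) (net_restrict H (cfm_net \<Delta> p'')))))"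

end

theory Submission
  imports Defs
begin

(* Every h-transition p' -> p'' of a state reachable from p is performed by one sequential
  component: dec p' = M + dec s' and dec p'' = M + dec s'' with s' reachable from some element
  of dec p; conversely every such transition of a component lifts to p. So it suffices that
  team equivalence of s' and s'' is unaffected by the idle context M. Adding M is harmless since
  the identity is a branching bisimulation of any FSM. Removing M is possible since branching
  bisimilarity is an equivalence, so its additive closure compares the multisets of equivalence
  classes and is cancellative. Finally, the net of s', s'' is a full sub-net of the net of
  p', p'' that is closed under transitions, and on such a sub-net branching bisimilarity is the
  restriction of branching bisimilarity of the larger net. *)

section \<open>Branching bisimilarity\<close>

lemma eps_trans:
  assumes "eps tau N a {#b#}" and "eps tau N b m"
  shows "eps tau N a m"
  using assms(2,1) by (induction rule: eps.induct) (auto intro: eps.tstep)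

lemma eps_mono:
  assumes "eps tau N1 s m" and "fsm.trans N1 \<subseteq> fsm.trans N2"
  shows "eps tau N2 s m"
  using assms by (induction rule: eps.induct) (auto intro: eps.intros)

lemma prel_relcomp: "prel R1 a b \<Longrightarrow> prel R2 b c \<Longrightarrow> prel (R1 O R2) a c"
  by (auto simp: prel_def)

definition post_rel :: "('s \<times> 's) set \<Rightarrow> 's multiset \<Rightarrow> 's multiset \<Rightarrow> bool" where
  "post_rel R m1 m2 \<longleftrightarrow> m1 = {#} \<and> m2 = {#} \<or> prel R m1 m2"

lemma post_rel_relcomp: "post_rel R1 a b \<Longrightarrow> post_rel R2 b c \<Longrightarrow> post_rel (R1 O R2) a c"
  by (auto simp: post_rel_def prel_def)

definition bb_match ::
    "'l \<Rightarrow> ('s, 'l) fsm \<Rightarrow> ('s \<times> 's) set \<Rightarrow> 's \<Rightarrow> 'l \<Rightarrow> 's multiset \<Rightarrow> 's \<Rightarrow> bool" where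
  "bb_match tau N R s1 l m1 s2 \<longleftrightarrow>
     (l = tau \<and> (\<exists>s'. eps tau N s2 {#s'#} \<and> (s1, s') \<in> R \<and> prel R m1 {#s'#}))
   \<or> (\<exists>s m2. eps tau N s2 {#s#} \<and> (s, l, m2) \<in> fsm.trans N \<and> (s1, s) \<in> R \<and> post_rel R m1 m2)"

lemma bb_half_iff_bb_match:
  "bb_half tau N R \<longleftrightarrow>
     (\<forall>s1 s2 l m1. (s1, s2) \<in> R \<longrightarrow> (s1, l, m1) \<in> fsm.trans N \<longrightarrow> bb_match tau N R s1 l m1 s2)"
  unfolding bb_half_def bb_match_def post_rel_def by blast

lemma bb_match_mono:
  assumes "bb_match tau N1 R s1 l m1 s2" and "fsm.trans N1 \<subseteq> fsm.trans N2"
  shows "bb_match tau N2 R s1 l m1 s2"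
  using assms eps_mono[OF _ assms(2)] unfolding bb_match_def by blast

lemma bb_match_tau_eps:
  assumes "bb_match tau N R s tau {#t#} u"
  shows "\<exists>u'. eps tau N u {#u'#} \<and> (t, u') \<in> R"
  using assms unfolding bb_match_def post_rel_def prel_def
  by (auto intro: eps.tstep)

lemma bb_half_eps_simulation:
  assumes "bb_half tau N R" and "eps tau N t {#t'#}" and "(t, u) \<in> R"
  shows "\<exists>u'. eps tau N u {#u'#} \<and> (t', u') \<in> R"
proof -
  have "\<exists>u'. eps tau N u {#u'#} \<and> (t', u') \<in> R"
    if "eps tau N s m" and "m = {#t'#}" and "(s, u) \<in> R" for s m t'
    using that
  proof (induction arbitrary: t' rule: eps.induct)
    case refl
    then show ?case using eps.refl by fastforce
  next
    case (tstep s s' m)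
    then obtain u1 where u1: "eps tau N u {#u1#}" "(s', u1) \<in> R" by blast
    with assms(1) tstep have "bb_match tau N R s' tau {#t'#} u1"
      by (simp add: bb_half_iff_bb_match)
    then show ?case using u1(1) by (blast dest: bb_match_tau_eps intro: eps_trans)
  qed
  with assms(2,3) show ?thesis by blast
qed

lemma bb_match_relcomp:
  assumes "bb_match tau N R1 s1 l m1 s2" and "bb_half tau N R2" and "(s2, s3) \<in> R2"
  shows "bb_match tau N (R1 O R2) s1 l m1 s3"
  using assms(1)[unfolded bb_match_def]
proof (elim disjE exE conjE)
  fix t' assume "l = tau" and t': "eps tau N s2 {#t'#}" "(s1, t') \<in> R1" "prel R1 m1 {#t'#}"
  moreover obtain u' where "eps tau N s3 {#u'#}" "(t', u') \<in> R2"
    using bb_half_eps_simulation[OF assms(2) t'(1) assms(3)] by blast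
  moreover from t'(3) \<open>(t', u') \<in> R2\<close> have "prel (R1 O R2) m1 {#u'#}"
    by (auto simp: prel_def)
  ultimately show ?thesis
    unfolding bb_match_def by blast
next
  fix t m2 assume t: "eps tau N s2 {#t#}" and tr: "(t, l, m2) \<in> fsm.trans N"
    and "(s1, t) \<in> R1" and m12: "post_rel R1 m1 m2"
  obtain u where u: "eps tau N s3 {#u#}" "(t, u) \<in> R2"
    using bb_half_eps_simulation[OF assms(2) t assms(3)] by blast
  with assms(2) tr have "bb_match tau N R2 t l m2 u"
    by (simp add: bb_half_iff_bb_match)
  then show ?thesis
    unfolding bb_match_def[of _ _ R2]
  proof (elim disjE exE conjE)
    fix u' assume "l = tau" "eps tau N u {#u'#}" "(t, u') \<in> R2" "prel R2 m2 {#u'#}"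
    moreover from m12 \<open>prel R2 m2 {#u'#}\<close> have "prel R1 m1 m2"
      by (auto simp: post_rel_def prel_def)
    ultimately show ?thesis
      using \<open>(s1, t) \<in> R1\<close> u(1) unfolding bb_match_def by (blast intro: prel_relcomp eps_trans)
  next
    fix v m3 assume "eps tau N u {#v#}" "(v, l, m3) \<in> fsm.trans N" "(t, v) \<in> R2"
      "post_rel R2 m2 m3"
    then show ?thesis
      using \<open>(s1, t) \<in> R1\<close> u(1) m12 unfolding bb_match_def
      by (blast intro: post_rel_relcomp eps_trans)
  qed
qed

lemma bb_half_relcomp:
  assumes "bb_half tau N R1" and "bb_half tau N R2"
  shows "bb_half tau N (R1 O R2)"
  unfolding bb_half_iff_bb_match
proof (intro allI impI)
  fix s1 s3 l m1 assume "(s1, s3) \<in> R1 O R2" and tr: "(s1, l, m1) \<in> fsm.trans N"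
  then obtain s2 where "(s1, s2) \<in> R1" and "(s2, s3) \<in> R2" by blast
  with assms(1) tr have "bb_match tau N R1 s1 l m1 s2" by (simp add: bb_half_iff_bb_match)
  then show "bb_match tau N (R1 O R2) s1 l m1 s3"
    using assms(2) \<open>(s2, s3) \<in> R2\<close> by (rule bb_match_relcomp)
qed

lemma branching_bisim_relcomp:
  assumes "branching_bisim tau N R1" and "branching_bisim tau N R2"
  shows "branching_bisim tau N (R1 O R2)"
  using assms bb_half_relcomp[of tau N "R2\<inverse>" "R1\<inverse>"]
  unfolding branching_bisim_def converse_relcomp by (auto intro: bb_half_relcomp)

lemma branching_bisim_converse: "branching_bisim tau N R \<Longrightarrow> branching_bisim tau N (R\<inverse>)"
  unfolding branching_bisim_def by auto

lemma bbisimilarI: "branching_bisim tau N R \<Longrightarrow> (a, b) \<in> R \<Longrightarrow> (a, b) \<in> bbisimilar tau N"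
  unfolding bbisimilar_def by blast

lemma bbisimilarE:
  assumes "(a, b) \<in> bbisimilar tau N"
  obtains R where "branching_bisim tau N R" and "(a, b) \<in> R"
  using assms unfolding bbisimilar_def by blast

lemma sym_bbisimilar: "sym (bbisimilar tau N)"
  by (rule symI) (meson bbisimilarE bbisimilarI branching_bisim_converse converseI)

lemma trans_bbisimilar: "Relation.trans (bbisimilar tau N)"
  by (rule transI) (meson bbisimilarE bbisimilarI branching_bisim_relcomp relcompI)

section \<open>Full sub-FSMs\<close>

(* The record type admits arbitrary post-set multisets; wf_fsm is the FSM condition
  T \<subseteq> S \<times> A \<times> (S \<union> {\<theta>}). *)
definition wf_fsm :: "('s, 'l) fsm \<Rightarrow> bool" where
  "wf_fsm N \<longleftrightarrow>
     (\<forall>(s, l, m) \<in> fsm.trans N. s \<in> places N \<and> (m = {#} \<or> (\<exists>s' \<in> places N. m = {#s'#})))"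

lemma wf_fsm_transD:
  "wf_fsm N \<Longrightarrow> (s, l, m) \<in> fsm.trans N \<Longrightarrow> s \<in> places N \<and> set_mset m \<subseteq> places N"
  unfolding wf_fsm_def by fastforce

definition full_subfsm :: "('s, 'l) fsm \<Rightarrow> ('s, 'l) fsm \<Rightarrow> bool" where
  "full_subfsm N1 N2 \<longleftrightarrow>
     places N1 \<subseteq> places N2 \<and> fsm.trans N1 = {(s, l, m) \<in> fsm.trans N2. s \<in> places N1}"

lemma branching_bisim_Id_on:
  assumes "wf_fsm N"
  shows "branching_bisim tau N (Id_on (places N))"
proof -
  have "bb_match tau N (Id_on (places N)) s l m s" if "(s, l, m) \<in> fsm.trans N" for s l m
    using assms that eps.refl[of tau N s]
    unfolding wf_fsm_def bb_match_def post_rel_def prel_def by fastforce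
  then have "bb_half tau N (Id_on (places N))"
    by (auto simp: bb_half_iff_bb_match)
  then show ?thesis
    unfolding branching_bisim_def by auto
qed

lemma bbisimilar_refl: "wf_fsm N \<Longrightarrow> s \<in> places N \<Longrightarrow> (s, s) \<in> bbisimilar tau N"
  by (blast intro: bbisimilarI branching_bisim_Id_on)

lemma bb_half_full_subfsm:
  assumes "full_subfsm N1 N2" and "bb_half tau N1 R" and "Domain R \<subseteq> places N1"
  shows "bb_half tau N2 R"
proof -
  have "fsm.trans N1 \<subseteq> fsm.trans N2"
    using assms(1) unfolding full_subfsm_def by auto
  moreover have "(s1, l, m1) \<in> fsm.trans N1"
    if "(s1, s2) \<in> R" and "(s1, l, m1) \<in> fsm.trans N2" for s1 s2 l m1
    using assms(1,3) that unfolding full_subfsm_def by blast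
  ultimately show ?thesis
    using assms(2) unfolding bb_half_iff_bb_match by (meson bb_match_mono)
qed

lemma branching_bisim_full_subfsm:
  assumes "full_subfsm N1 N2" and "branching_bisim tau N1 R"
  shows "branching_bisim tau N2 R"
  using assms bb_half_full_subfsm[OF assms(1), of tau R]
    bb_half_full_subfsm[OF assms(1), of tau "R\<inverse>"]
  unfolding branching_bisim_def full_subfsm_def by auto

lemma bbisimilar_full_subfsm: "full_subfsm N1 N2 \<Longrightarrow> bbisimilar tau N1 \<subseteq> bbisimilar tau N2"
  by (auto elim!: bbisimilarE intro: bbisimilarI branching_bisim_full_subfsm)

lemma eps_full_subfsm_restrict:
  assumes "full_subfsm N1 N2" and "wf_fsm N1"
    and "eps tau N2 s m" and "s \<in> places N1"
  shows "eps tau N1 s m \<and> set_mset m \<subseteq> places N1"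
  using assms(3,4)
proof (induction rule: eps.induct)
  case refl
  then show ?case by (auto intro: eps.refl)
next
  case (tstep s s' m)
  then have "(s', tau, m) \<in> fsm.trans N1"
    using assms(1) unfolding full_subfsm_def by auto
  with tstep assms(2) show ?case
    by (auto dest: wf_fsm_transD intro: eps.tstep)
qed

lemma bb_match_full_subfsm_restrict:
  assumes "full_subfsm N1 N2" and "wf_fsm N1" and "bb_match tau N2 R s1 l m1 s2"
    and "s1 \<in> places N1" and "s2 \<in> places N1" and "set_mset m1 \<subseteq> places N1"
  shows "bb_match tau N1 (R \<inter> places N1 \<times> places N1) s1 l m1 s2"
proof -
  let ?P = "places N1"
  have eps: "eps tau N1 s2 {#s#} \<and> s \<in> ?P" if "eps tau N2 s2 {#s#}" for s
    using eps_full_subfsm_restrict[OF assms(1,2) that assms(5)] by simp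
  have tr: "(s, l, m2) \<in> fsm.trans N1 \<and> set_mset m2 \<subseteq> ?P"
    if "(s, l, m2) \<in> fsm.trans N2" and "s \<in> ?P" for s m2
    using assms(1,2) that unfolding full_subfsm_def by (auto dest: wf_fsm_transD)
  have prel: "prel (R \<inter> ?P \<times> ?P) a b"
    if "prel R a b" and "set_mset a \<subseteq> ?P" and "set_mset b \<subseteq> ?P" for a b
    using that by (auto simp: prel_def)
  show ?thesis
    using assms(3)[unfolded bb_match_def]
  proof (elim disjE exE conjE)
    fix s' assume "l = tau" "eps tau N2 s2 {#s'#}" "(s1, s') \<in> R" "prel R m1 {#s'#}"
    moreover from eps \<open>eps tau N2 s2 {#s'#}\<close> have "eps tau N1 s2 {#s'#}" "s' \<in> ?P" by auto
    ultimately show ?thesis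
      using assms(4,6) prel unfolding bb_match_def by fastforce
  next
    fix s m2 assume "eps tau N2 s2 {#s#}" "(s, l, m2) \<in> fsm.trans N2" "(s1, s) \<in> R"
      "post_rel R m1 m2"
    moreover from eps \<open>eps tau N2 s2 {#s#}\<close> have "eps tau N1 s2 {#s#}" "s \<in> ?P" by auto
    ultimately show ?thesis
      using assms(4,6) prel tr unfolding bb_match_def post_rel_def by blast
  qed
qed

lemma bb_half_full_subfsm_restrict:
  assumes "full_subfsm N1 N2" and "wf_fsm N1" and "bb_half tau N2 R"
  shows "bb_half tau N1 (R \<inter> places N1 \<times> places N1)"
  unfolding bb_half_iff_bb_match
proof (intro allI impI)
  fix s1 s2 l m1
  assume "(s1, s2) \<in> R \<inter> places N1 \<times> places N1" and tr: "(s1, l, m1) \<in> fsm.trans N1"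
  moreover from tr assms(1) have "(s1, l, m1) \<in> fsm.trans N2"
    unfolding full_subfsm_def by auto
  moreover from tr assms(2) have "set_mset m1 \<subseteq> places N1"
    by (simp add: wf_fsm_transD)
  ultimately show "bb_match tau N1 (R \<inter> places N1 \<times> places N1) s1 l m1 s2"
    using assms by (auto simp: bb_half_iff_bb_match intro: bb_match_full_subfsm_restrict)
qed

lemma branching_bisim_full_subfsm_restrict:
  assumes "full_subfsm N1 N2" and "wf_fsm N1" and "branching_bisim tau N2 R"
  shows "branching_bisim tau N1 (R \<inter> places N1 \<times> places N1)"
proof -
  have "(R \<inter> places N1 \<times> places N1)\<inverse> = R\<inverse> \<inter> places N1 \<times> places N1" by auto
  then show ?thesis
    using assms bb_half_full_subfsm_restrict[OF assms(1,2)] unfolding branching_bisim_def by auto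
qed

lemma bbisimilar_full_subfsm_restrict:
  "full_subfsm N1 N2 \<Longrightarrow> wf_fsm N1 \<Longrightarrow>
    bbisimilar tau N2 \<inter> places N1 \<times> places N1 \<subseteq> bbisimilar tau N1"
  by (auto elim!: bbisimilarE intro: bbisimilarI branching_bisim_full_subfsm_restrict)

section \<open>Additive closure\<close>

lemma add_closure_plus:
  "(X1, Y1) \<in> add_closure R \<Longrightarrow> (X2, Y2) \<in> add_closure R \<Longrightarrow> (X1 + X2, Y1 + Y2) \<in> add_closure R"
  by (induction rule: add_closure.induct) (auto intro: add_closure.add)

lemma add_closure_mono: "(X, Y) \<in> add_closure R \<Longrightarrow> R \<subseteq> S \<Longrightarrow> (X, Y) \<in> add_closure S"
  by (induction rule: add_closure.induct) (auto intro: add_closure.intros)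

lemma add_closure_refl: "(\<And>x. x \<in># X \<Longrightarrow> (x, x) \<in> R) \<Longrightarrow> (X, X) \<in> add_closure R"
  by (induction X) (auto intro: add_closure.intros)

lemma add_closure_restrict:
  "(X, Y) \<in> add_closure R \<Longrightarrow> set_mset X \<subseteq> P \<Longrightarrow> set_mset Y \<subseteq> P \<Longrightarrow>
    (X, Y) \<in> add_closure (R \<inter> P \<times> P)"
  by (induction rule: add_closure.induct) (auto intro: add_closure.intros)

lemma add_closure_iff_image_classes:
  assumes "sym R" and "Relation.trans R"
  shows "(X, Y) \<in> add_closure R \<longleftrightarrow>
    set_mset X \<subseteq> Domain R \<and> image_mset (\<lambda>x. R `` {x}) X = image_mset (\<lambda>x. R `` {x}) Y"
    (is "_ \<longleftrightarrow> _ \<and> image_mset ?cl X = image_mset ?cl Y")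
proof
  have cl_eq: "?cl a = ?cl b" if "(a, b) \<in> R" for a b
    using that by (auto intro: transD[OF assms(2)] symD[OF assms(1)])
  show "(X, Y) \<in> add_closure R \<Longrightarrow> set_mset X \<subseteq> Domain R \<and> image_mset ?cl X = image_mset ?cl Y"
    by (induction rule: add_closure.induct) (auto dest: cl_eq)
next
  show "set_mset X \<subseteq> Domain R \<and> image_mset ?cl X = image_mset ?cl Y \<Longrightarrow> (X, Y) \<in> add_closure R"
  proof (induction X arbitrary: Y)
    case empty
    then show ?case by (auto intro: add_closure.empty)
  next
    case (add x X)
    then have "image_mset ?cl Y = add_mset (?cl x) (image_mset ?cl X)" by simp
    then obtain y Y' where Y: "Y = add_mset y Y'" and "?cl y = ?cl x"
      and "image_mset ?cl Y' = image_mset ?cl X"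
      by (blast dest: msed_map_invR)
    moreover from add.prems have "(x, x) \<in> R"
      by (auto intro: transD[OF assms(2)] symD[OF assms(1)])
    ultimately have "(x, y) \<in> R" and "(X, Y') \<in> add_closure R"
      using add.prems add.IH by (auto intro: symD[OF assms(1)])
    then show ?case
      unfolding Y by (rule add_closure.add)
  qed
qed

lemma add_closure_cancel:
  assumes "sym R" and "Relation.trans R" and "(M + X, M + Y) \<in> add_closure R"
  shows "(X, Y) \<in> add_closure R"
  using assms(3) unfolding add_closure_iff_image_classes[OF assms(1,2)] by auto

section \<open>CFM processes and their nets\<close>

lemma reachable_refl: "reachable \<Delta> p p"
  by (simp add: reachable_def)

lemma reachable_step: "reachable \<Delta> p p' \<Longrightarrow> step \<Delta> p' \<mu> p'' \<Longrightarrow> reachable \<Delta> p p''"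
  unfolding reachable_def by (rule rtranclp.rtrancl_into_rtrancl) auto

lemma reachable_induct [consumes 1, case_names base step]:
  assumes "reachable \<Delta> p q" and "P p"
    and "\<And>q \<mu> q'. reachable \<Delta> p q \<Longrightarrow> step \<Delta> q \<mu> q' \<Longrightarrow> P q \<Longrightarrow> P q'"
  shows "P q"
  using assms(1) unfolding reachable_def
  by (induction rule: rtranclp_induct) (auto simp: reachable_def intro: assms(2,3))

lemma reachable_PPar_left: "reachable \<Delta> a a' \<Longrightarrow> reachable \<Delta> (PPar a b) (PPar a' b)"
  by (induction rule: reachable_induct) (auto intro: reachable_refl reachable_step step.parl)

lemma reachable_PPar_right: "reachable \<Delta> b b' \<Longrightarrow> reachable \<Delta> (PPar a b) (PPar a b')"
  by (induction rule: reachable_induct) (auto intro: reachable_refl reachable_step step.parr)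

lemma reachable_PNil: "reachable \<Delta> PNil q \<Longrightarrow> q = PNil"
proof (induction rule: reachable_induct)
  case (step q \<mu> q')
  then have "step \<Delta> PNil \<mu> q'" by simp
  then show ?case by cases
qed simp

lemma reachable_PParE:
  assumes "reachable \<Delta> (PPar a b) q"
  obtains a' b' where "q = PPar a' b'" and "reachable \<Delta> a a'" and "reachable \<Delta> b b'"
proof -
  from assms have "\<exists>a' b'. q = PPar a' b' \<and> reachable \<Delta> a a' \<and> reachable \<Delta> b b'"
  proof (induction rule: reachable_induct)
    case base
    then show ?case by (blast intro: reachable_refl)
  next
    case (step q \<mu> q')
    then obtain a' b' where q: "q = PPar a' b'" and ab: "reachable \<Delta> a a'" "reachable \<Delta> b b'"
      by blast
    from step.hyps(2)[unfolded q] show ?case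
      by cases (use ab in \<open>auto intro: reachable_step\<close>)
  qed
  with that show ?thesis by blast
qed

definition net_restrict_on ::
    "'a set \<Rightarrow> ('c \<Rightarrow> ('a, 'c) proc) \<Rightarrow> ('a, 'c) proc set \<Rightarrow> (('a, 'c) proc, 'a) fsm" where
  "net_restrict_on H \<Delta> P = \<lparr>places = P, labels = UNIV - H,
     trans = {(s, \<mu>, dec s') | s \<mu> s'. s \<in> P \<and> \<mu> \<notin> H \<and> step \<Delta> s \<mu> s'}\<rparr>"

lemma places_net_restrict_on [simp]: "places (net_restrict_on H \<Delta> P) = P"
  by (simp add: net_restrict_on_def)

lemma fsm_union_net_restrict:
  "fsm_union (net_restrict H (cfm_net \<Delta> p)) (net_restrict H (cfm_net \<Delta> q))
     = net_restrict_on H \<Delta> (net_places \<Delta> p \<union> net_places \<Delta> q)"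
  unfolding fsm_union_def net_restrict_def cfm_net_def net_restrict_on_def by auto

lemma full_subfsm_net_restrict_on:
  "P1 \<subseteq> P2 \<Longrightarrow> full_subfsm (net_restrict_on H \<Delta> P1) (net_restrict_on H \<Delta> P2)"
  unfolding full_subfsm_def net_restrict_on_def by auto

lemma sequential_step: "step \<Delta> q \<mu> q' \<Longrightarrow> cfm_defs \<Delta> \<Longrightarrow> sequential q \<Longrightarrow> sequential q'"
proof (induction rule: step.induct)
  case (con C \<mu> p')
  then show ?case by (simp add: sequential_def cfm_defs_def)
qed (auto simp: sequential_def)

lemma dec_sequential: "sequential q \<Longrightarrow> dec q = (if q = PNil then {#} else {#q#})"
  by (cases q) (auto simp: sequential_def)

lemma sequential_parallel: "sequential q \<Longrightarrow> parallel q"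
  by (cases q) (auto simp: sequential_def)

lemma parallel_dec_sequential: "parallel q \<Longrightarrow> x \<in># dec q \<Longrightarrow> sequential x"
  by (induction q) (auto simp: sequential_def)

lemma parallel_step: "step \<Delta> q \<mu> q' \<Longrightarrow> cfm_defs \<Delta> \<Longrightarrow> parallel q \<Longrightarrow> parallel q'"
proof (induction q arbitrary: q')
  case (PPar a b)
  from PPar.prems(1) show ?case
    by cases (use PPar in auto)
qed (auto intro: sequential_parallel sequential_step)

lemma parallel_reachable: "reachable \<Delta> p q \<Longrightarrow> cfm_defs \<Delta> \<Longrightarrow> parallel p \<Longrightarrow> parallel q"
  by (induction rule: reachable_induct) (auto intro: parallel_step)

lemma sequential_net_places:
  "s \<in> net_places \<Delta> q \<Longrightarrow> cfm_defs \<Delta> \<Longrightarrow> parallel q \<Longrightarrow> sequential s"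
proof (induction rule: net_places.induct)
  case (init s)
  then show ?case by (blast intro: parallel_dec_sequential)
next
  case (succ s \<mu> s' s'')
  then have "sequential s'" by (blast intro: sequential_step)
  with succ.hyps(3) show ?case by (simp add: dec_sequential split: if_splits)
qed

lemma net_places_mono:
  assumes "set_mset (dec p) \<subseteq> net_places \<Delta> q"
  shows "net_places \<Delta> p \<subseteq> net_places \<Delta> q"
proof
  show "s \<in> net_places \<Delta> q" if "s \<in> net_places \<Delta> p" for s
    using that assms by (induction rule: net_places.induct) (auto intro: net_places.succ)
qed

lemma wf_fsm_net_restrict_on:
  assumes "cfm_defs \<Delta>" and "\<And>s. s \<in> net_places \<Delta> p \<union> net_places \<Delta> q \<Longrightarrow> sequential s"
  shows "wf_fsm (net_restrict_on H \<Delta> (net_places \<Delta> p \<union> net_places \<Delta> q))"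
  unfolding wf_fsm_def
proof (intro ballI, clarify)
  let ?P = "net_places \<Delta> p \<union> net_places \<Delta> q"
  fix s \<mu> m assume "(s, \<mu>, m) \<in> fsm.trans (net_restrict_on H \<Delta> ?P)"
  then obtain s' where s: "s \<in> ?P" and st: "step \<Delta> s \<mu> s'" and m: "m = dec s'"
    unfolding net_restrict_on_def by auto
  have "sequential s'"
    using sequential_step[OF st assms(1) assms(2)[OF s]] .
  moreover have "s' \<in> ?P" if "s' \<noteq> PNil"
    using s st that \<open>sequential s'\<close> by (auto simp: dec_sequential intro: net_places.succ)
  ultimately show "s \<in> places (net_restrict_on H \<Delta> ?P) \<and>
      (m = {#} \<or> (\<exists>s'' \<in> places (net_restrict_on H \<Delta> ?P). m = {#s''#}))"
    using s m by (auto simp: net_restrict_on_def dec_sequential)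
qed

section \<open>Components of a process\<close>

lemma reachable_step_in_component:
  assumes "reachable \<Delta> p p'" and "step \<Delta> p' h p''"
  shows "\<exists>pi s' s'' M. pi \<in># dec p \<and> reachable \<Delta> pi s' \<and> step \<Delta> s' h s''
           \<and> dec p' = M + dec s' \<and> dec p'' = M + dec s''"
  using assms
proof (induction p arbitrary: p' p'')
  case PNil
  then have "step \<Delta> PNil h p''" by (blast dest: reachable_PNil)
  then show ?case by cases
next
  case (PPar a b)
  then obtain a' b' where p': "p' = PPar a' b'" and "reachable \<Delta> a a'" "reachable \<Delta> b b'"
    by (blast elim: reachable_PParE)
  from PPar.prems(2)[unfolded p'] show ?case
  proof cases
    case (parl a'')
    with PPar.IH(1) \<open>reachable \<Delta> a a'\<close> obtain pi s' s'' M where "pi \<in># dec a"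
      "reachable \<Delta> pi s'" "step \<Delta> s' h s''" "dec a' = M + dec s'" "dec a'' = M + dec s''"
      by blast
    with p' parl show ?thesis
      by (intro exI[of _ pi] exI[of _ s'] exI[of _ s''] exI[of _ "M + dec b'"])
        (auto simp: ac_simps)
  next
    case (parr b'')
    with PPar.IH(2) \<open>reachable \<Delta> b b'\<close> obtain pi s' s'' M where "pi \<in># dec b"
      "reachable \<Delta> pi s'" "step \<Delta> s' h s''" "dec b' = M + dec s'" "dec b'' = M + dec s''"
      by blast
    with p' parr show ?thesis
      by (intro exI[of _ pi] exI[of _ s'] exI[of _ s''] exI[of _ "M + dec a'"])
        (auto simp: ac_simps)
  qed
qed force+ \<comment> \<open>a sequential \<open>p\<close> is its own only component\<close>

lemma component_step_in_reachable:
  assumes "pi \<in># dec p" and "reachable \<Delta> pi s'" and "step \<Delta> s' h s''"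
  shows "\<exists>p' p'' M. reachable \<Delta> p p' \<and> step \<Delta> p' h p''
           \<and> dec p' = M + dec s' \<and> dec p'' = M + dec s''"
  using assms
proof (induction p)
  case (PPar a b)
  then consider "pi \<in># dec a" | "pi \<in># dec b" by auto
  then show ?case
  proof cases
    case 1
    with PPar obtain a' a'' M where "reachable \<Delta> a a'" "step \<Delta> a' h a''"
      "dec a' = M + dec s'" "dec a'' = M + dec s''"
      by blast
    then show ?thesis
      by (intro exI[of _ "PPar a' b"] exI[of _ "PPar a'' b"] exI[of _ "M + dec b"])
        (auto simp: ac_simps intro: reachable_PPar_left step.parl)
  next
    case 2
    with PPar obtain b' b'' M where "reachable \<Delta> b b'" "step \<Delta> b' h b''"
      "dec b' = M + dec s'" "dec b'' = M + dec s''"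
      by blast
    then show ?thesis
      by (intro exI[of _ "PPar a b'"] exI[of _ "PPar a b''"] exI[of _ "M + dec a"])
        (auto simp: ac_simps intro: reachable_PPar_right step.parr)
  qed
qed force+

definition hidden_team_equiv ::
    "'a \<Rightarrow> 'a set \<Rightarrow> ('c \<Rightarrow> ('a, 'c) proc) \<Rightarrow> ('a, 'c) proc \<Rightarrow> ('a, 'c) proc \<Rightarrow> bool" where
  "hidden_team_equiv tau H \<Delta> p q \<longleftrightarrow>
     (dec p, dec q) \<in>
       add_closure (bbisimilar tau (net_restrict_on H \<Delta> (net_places \<Delta> p \<union> net_places \<Delta> q)))"

lemma DNI_iff_hidden_team_equiv:
  "DNI tau H \<Delta> p \<longleftrightarrow>
     (\<forall>p' h p''. reachable \<Delta> p p' \<longrightarrow> h \<in> H \<longrightarrow> step \<Delta> p' h p'' \<longrightarrow>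
        hidden_team_equiv tau H \<Delta> p' p'')"
  unfolding DNI_def hidden_team_equiv_def fsm_union_net_restrict by (meson reachable_step)

lemma hidden_team_equiv_context:
  assumes "cfm_defs \<Delta>" and "parallel p" and "parallel q"
    and p: "dec p = M + dec s" and q: "dec q = M + dec t"
  shows "hidden_team_equiv tau H \<Delta> s t \<longleftrightarrow> hidden_team_equiv tau H \<Delta> p q"
proof -
  let ?Ps = "net_places \<Delta> s \<union> net_places \<Delta> t"
  let ?Pp = "net_places \<Delta> p \<union> net_places \<Delta> q"
  let ?Bs = "bbisimilar tau (net_restrict_on H \<Delta> ?Ps)"
  let ?Bp = "bbisimilar tau (net_restrict_on H \<Delta> ?Pp)"
  have "net_places \<Delta> s \<subseteq> net_places \<Delta> p" "net_places \<Delta> t \<subseteq> net_places \<Delta> q"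
    using p q by (auto intro!: net_places_mono net_places.init)
  then have sub: "full_subfsm (net_restrict_on H \<Delta> ?Ps) (net_restrict_on H \<Delta> ?Pp)"
    by (intro full_subfsm_net_restrict_on) auto
  have "sequential x" if "x \<in> ?Pp" for x
    using that assms(1-3) by (auto intro: sequential_net_places)
  with sub have wf: "wf_fsm (net_restrict_on H \<Delta> ?Pp)" "wf_fsm (net_restrict_on H \<Delta> ?Ps)"
    using assms(1) unfolding full_subfsm_def by (auto intro!: wf_fsm_net_restrict_on)
  show ?thesis
    unfolding hidden_team_equiv_def
  proof
    assume "(dec s, dec t) \<in> add_closure ?Bs"
    then have "(dec s, dec t) \<in> add_closure ?Bp"
      using bbisimilar_full_subfsm[OF sub] by (rule add_closure_mono)
    moreover have "set_mset M \<subseteq> net_places \<Delta> p"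
      using p net_places.init[of _ p \<Delta>] by auto
    then have "(M, M) \<in> add_closure ?Bp"
      using wf(1) by (auto intro!: add_closure_refl bbisimilar_refl)
    ultimately show "(dec p, dec q) \<in> add_closure ?Bp"
      unfolding p q by (rule add_closure_plus[rotated])
  next
    assume "(dec p, dec q) \<in> add_closure ?Bp"
    then have "(dec s, dec t) \<in> add_closure ?Bp"
      unfolding p q by (rule add_closure_cancel[OF sym_bbisimilar trans_bbisimilar])
    then have "(dec s, dec t) \<in> add_closure (?Bp \<inter> ?Ps \<times> ?Ps)"
      by (rule add_closure_restrict) (auto intro: net_places.init)
    then show "(dec s, dec t) \<in> add_closure ?Bs"
      using bbisimilar_full_subfsm_restrict[OF sub wf(2)] by (auto intro: add_closure_mono)
  qed
qed

lemma DNI_iff_components: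
  assumes "cfm_process \<Delta> p"
  shows "DNI tau H \<Delta> p \<longleftrightarrow> (\<forall>pi \<in># dec p. DNI tau H \<Delta> pi)"
proof -
  have defs: "cfm_defs \<Delta>" and "parallel p"
    using assms unfolding cfm_process_def by auto
  have context_iff: "hidden_team_equiv tau H \<Delta> s' s'' \<longleftrightarrow> hidden_team_equiv tau H \<Delta> p' p''"
    if "reachable \<Delta> p p'" "step \<Delta> p' h p''" "dec p' = M + dec s'" "dec p'' = M + dec s''"
    for p' p'' s' s'' h M
  proof (rule hidden_team_equiv_context[OF defs _ _ that(3,4)])
    show "parallel p'" "parallel p''"
      using that(1,2) defs \<open>parallel p\<close> by (blast intro: parallel_reachable reachable_step)+
  qed
  show ?thesis
  proof (intro iffI ballI)
    fix pi assume dni: "DNI tau H \<Delta> p" and "pi \<in># dec p"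
    show "DNI tau H \<Delta> pi"
      unfolding DNI_iff_hidden_team_equiv
    proof (intro allI impI)
      fix s' h s'' assume "reachable \<Delta> pi s'" and "h \<in> H" and "step \<Delta> s' h s''"
      from component_step_in_reachable[OF \<open>pi \<in># dec p\<close> this(1,3)] obtain p' p'' M
        where "reachable \<Delta> p p'" "step \<Delta> p' h p''" "dec p' = M + dec s'" "dec p'' = M + dec s''"
        by blast
      with dni \<open>h \<in> H\<close> show "hidden_team_equiv tau H \<Delta> s' s''"
        unfolding DNI_iff_hidden_team_equiv by (blast dest: context_iff)
    qed
  next
    assume dni: "\<forall>pi \<in># dec p. DNI tau H \<Delta> pi"
    show "DNI tau H \<Delta> p"
      unfolding DNI_iff_hidden_team_equiv
    proof (intro allI impI)
      fix p' h p'' assume "reachable \<Delta> p p'" and "h \<in> H" and "step \<Delta> p' h p''"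
      moreover from reachable_step_in_component[OF this(1,3)] obtain pi s' s'' M
        where "pi \<in># dec p" "reachable \<Delta> pi s'" "step \<Delta> s' h s''"
          "dec p' = M + dec s'" "dec p'' = M + dec s''"
        by blast
      ultimately show "hidden_team_equiv tau H \<Delta> p' p''"
        using dni unfolding DNI_iff_hidden_team_equiv by (blast dest: context_iff)
    qed
  qed
qed

theorem theorem4p1:
  fixes tau :: 'a and H :: "'a set" and \<Delta> :: "'c \<Rightarrow> ('a, 'c) proc" and p :: "('a, 'c) proc"
  assumes "finite (UNIV :: 'a set)" and "finite (UNIV :: 'c set)"
    and "tau \<notin> H"
    and "cfm_process \<Delta> p"
  shows "\<not> DNI tau H \<Delta> p \<longleftrightarrow> (\<exists>pi. pi \<in># dec p \<and> \<not> DNI tau H \<Delta> pi)"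
  using DNI_iff_components[OF assms(4)] by blast

end
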